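(* In the setting described in the context, as $n\to\infty$, \[ \frac{1}{(2\pi i)^d}\int_{\mathcal N_{\mathbf 1}}\frac{(1+z_1)\cdots(1+z_{d-1})}{B(\hat{\mathbf z})\,z_1\cdots z_d}\cdot\frac{B(\hat{\mathbf z})-z_d^2A(\hat{\mathbf z})}{1-z_d}\cdot\bar S(\mathbf z)^n\,d\mathbf z\ \sim\ \frac{1}{\pi^d}\int_{\mathcal M}e^{n\log\bar S(e^{i\boldsymbol\theta})}\,d\boldsymbol\theta, \] where $\mathcal M=(-\delta,\delta)^d$ and $e^{i\boldsymbol\theta}=(e^{i\theta_1},\dots,e^{i\theta_d})$ (the logarithm is the principal branch, well-defined since $\bar S(e^{i\boldsymbol\theta})$ is close to the positive real number $S(\mathbf 1)$ on $\mathcal M$ for large $n$).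
   Context: Setting: $d\ge1$; $\mathcal{S}\subset\{-1,0,1\}^d\setminus\{\mathbf 0\}$ with positive weights $w_{\mathbf{i}}$, characteristic polynomial $S(\mathbf{z})=\sum_{\mathbf{i}\in\mathcal{S}}w_{\mathbf{i}}\mathbf{z}^{\mathbf{i}}=z_d^{-1}A(\hat{\mathbf{z}})+Q(\hat{\mathbf{z}})+z_dB(\hat{\mathbf{z}})$ with $\hat{\mathbf z}=(z_1,\dots,z_{d-1})$, where $\mathcal{S}$ is symmetric (including weights) over each of the first $d-1$ axes (so $A,Q,B$ are invariant under $z_j\mapsto1/z_j$, $j\le d-1$), $\mathcal{S}$ has a step with $j$th coordinate $+1$ and one with $-1$ for every $j$, and $A(\mathbf 1)=B(\mathbf 1)$ (zero drift). Let $\bar S(\mathbf z)=S(z_1,\dots,z_{d-1},1/z_d)=z_dA(\hat{\mathbf z})+Q(\hat{\mathbf z})+z_d^{-1}B(\hat{\mathbf z})$. Set $\epsilon=n^{-\alpha}$, $\delta=n^{-\beta}$ with constants satisfying $1/2<\alpha<2\beta$, $\alpha+\beta>1$, $1/3<\beta<1/2$. $\mathcal N_{\mathbf 1}=\{\mathbf z\in\mathbb C^d: |z_j|=1\ (1\le j\le d-1),\ |z_d|=1-\epsilon,\ |\arg z_j|<\delta\ \text{for all } j\}$, with counterclockwise orientation of each arc. *)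

theory Defs
  imports "HOL-Analysis.Analysis" "HOL-Library.Landau_Symbols"
begin

text \<open>Steps are functions nat => int; coordinates 0..d-1 (coordinate d-1 is the
 paper's z_d). Points of C^d are functions nat => complex (only indices < d matter).\<close>

definition char_poly :: "nat \<Rightarrow> (nat \<Rightarrow> int) set \<Rightarrow> ((nat \<Rightarrow> int) \<Rightarrow> real) \<Rightarrow> (nat \<Rightarrow> complex) \<Rightarrow> complex" where
  "char_poly d S w z = (\<Sum>s\<in>S. complex_of_real (w s) * (\<Prod>j<d. z j powi s j))"

definition char_A :: "nat \<Rightarrow> (nat \<Rightarrow> int) set \<Rightarrow> ((nat \<Rightarrow> int) \<Rightarrow> real) \<Rightarrow> (nat \<Rightarrow> complex) \<Rightarrow> complex" where
  "char_A d S w z = (\<Sum>s\<in>{s\<in>S. s (d-1) = -1}. complex_of_real (w s) * (\<Prod>j<d-1. z j powi s j))"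

definition char_B :: "nat \<Rightarrow> (nat \<Rightarrow> int) set \<Rightarrow> ((nat \<Rightarrow> int) \<Rightarrow> real) \<Rightarrow> (nat \<Rightarrow> complex) \<Rightarrow> complex" where
  "char_B d S w z = (\<Sum>s\<in>{s\<in>S. s (d-1) = 1}. complex_of_real (w s) * (\<Prod>j<d-1. z j powi s j))"

definition char_Sbar :: "nat \<Rightarrow> (nat \<Rightarrow> int) set \<Rightarrow> ((nat \<Rightarrow> int) \<Rightarrow> real) \<Rightarrow> (nat \<Rightarrow> complex) \<Rightarrow> complex" where
  "char_Sbar d S w z = char_poly d S w (z(d-1 := inverse (z (d-1))))"

definition angle_box :: "nat \<Rightarrow> real \<Rightarrow> (nat \<Rightarrow> real) set" where
  "angle_box d \<delta> = PiE {..<d} (\<lambda>_. {-\<delta><..<\<delta>})"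

definition arc_point :: "(nat \<Rightarrow> real) \<Rightarrow> (nat \<Rightarrow> real) \<Rightarrow> nat \<Rightarrow> complex" where
  "arc_point r \<theta> = (\<lambda>j. complex_of_real (r j) * cis (\<theta> j))"

text \<open>Integral of F dz_1...dz_d over the product of counterclockwise arcs
 {|z_j| = r_j, |arg z_j| < delta}, parametrised by z_j = r_j e^{i theta_j},
 dz_j = i z_j d theta_j.\<close>
definition torus_arc_integral :: "nat \<Rightarrow> (nat \<Rightarrow> real) \<Rightarrow> real \<Rightarrow> ((nat \<Rightarrow> complex) \<Rightarrow> complex) \<Rightarrow> complex" where
  "torus_arc_integral d r \<delta> F =
     (LINT \<theta>:angle_box d \<delta>|PiM {..<d} (\<lambda>_. lborel).
        F (arc_point r \<theta>) * (\<Prod>j<d. \<i> * arc_point r \<theta> j))"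

end

theory Submission
  imports Defs "HOL-Probability.Characteristic_Functions"
begin

(* Parametrise the arcs as z_j = e^(i theta_j) for j < d and z_d = (1 - epsilon) e^(i theta_d).
   With dz = i z d theta the integrand becomes (2 i)^d P(theta) Sbar((1 - epsilon) e^(i theta))^n,
   where the normalised prefactor P tends to 1 uniformly on the box: each (1 + z_j)/2 is 1 + O(delta),
   and by the reflection symmetry B - A is of second order, so that (B - z_d^2 A)/((1 - z_d) B)
   = 2 + O(delta^2/epsilon + delta + epsilon).  Zero drift kills the first order terms in epsilon and
   in theta: Sbar((1 - epsilon) e^(i theta)) = Sbar(e^(i theta)) (1 + O(epsilon delta + epsilon^2)),
   harmless after the n-th power since n (epsilon delta + epsilon^2) -> 0, and Sbar(e^(i theta)) has
   imaginary part O(delta^3) with n delta^3 -> 0.  Hence both integrands are, uniformly in theta,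
   small relative perturbations of the positive function (Re Sbar(e^(i theta)))^n, and their
   integrals have ratio tending to 1. *)

lemma norm_cis_minus_one_le: "cmod (cis x - 1) \<le> \<bar>x\<bar>"
  using iexp_approx1[of x 0] by (simp add: cis_conv_exp)

lemma norm_cis_minus_linear_le: "cmod (cis x - 1 - \<i> * x) \<le> x\<^sup>2 / 2"
  using iexp_approx1[of x 1] by (simp add: cis_conv_exp power2_eq_square diff_diff_add)

lemma norm_scaled_cis_minus_one_le:
  assumes "0 \<le> \<epsilon>" "\<bar>t\<bar> \<le> \<delta>"
  shows "cmod (complex_of_real (1 - \<epsilon>) * cis t - 1) \<le> \<epsilon> + \<delta>"
proof -
  have "complex_of_real (1 - \<epsilon>) * cis t - 1 = - complex_of_real \<epsilon> * cis t + (cis t - 1)"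
    by (simp add: algebra_simps)
  then have "cmod (complex_of_real (1 - \<epsilon>) * cis t - 1) \<le> cmod (- complex_of_real \<epsilon> * cis t) + cmod (cis t - 1)"
    by (metis norm_triangle_ineq)
  also have "\<dots> \<le> \<epsilon> + \<delta>"
    using assms order_trans[OF norm_cis_minus_one_le] by (simp add: norm_mult)
  finally show ?thesis .
qed

lemma cos_ge_one_minus_square: "1 - x\<^sup>2 / 2 \<le> cos (x::real)"
proof -
  have "\<bar>Re (cis x - 1 - \<i> * x)\<bar> \<le> x\<^sup>2 / 2"
    using norm_cis_minus_linear_le[of x] abs_Re_le_cmod order_trans by blast
  then show ?thesis by simp
qed

lemma abs_sin_minus_self_le: "\<bar>sin x - x\<bar> \<le> \<bar>x::real\<bar> ^ 3 / 6"
proof -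
  have "cmod (cis x - (1 + \<i> * x - x\<^sup>2 / 2)) \<le> \<bar>x\<bar> ^ 3 / 6"
    using iexp_approx1[of x 2]
    by (simp add: cis_conv_exp power2_eq_square eval_nat_numeral fact_numeral algebra_simps)
  then have "\<bar>Im (cis x - (1 + \<i> * x - x\<^sup>2 / 2))\<bar> \<le> \<bar>x\<bar> ^ 3 / 6"
    using abs_Im_le_cmod order_trans by blast
  then show ?thesis by simp
qed

lemma square_le_of_abs_le: "\<bar>x::real\<bar> \<le> y \<Longrightarrow> x\<^sup>2 \<le> y\<^sup>2"
  using power_mono[of "\<bar>x\<bar>" y 2] by simp

lemma borel_measurable_cis [measurable]: "cis \<in> borel_measurable borel"
  by (intro borel_measurable_continuous_onI continuous_intros)

lemma prod_polar_power_int: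
  "finite I \<Longrightarrow> (\<Prod>j\<in>I. (complex_of_real (a j) * cis (t j)) powi k j) =
     complex_of_real (\<Prod>j\<in>I. a j powi k j) * cis (\<Sum>j\<in>I. of_int (k j) * t j)"
proof (induction I rule: finite_induct)
  case (insert x F)
  then show ?case
    by (simp add: power_int_mult_distrib cis_power_int cis_mult[symmetric] algebra_simps)
qed simp

lemma abs_sum_mult_le_card:
  fixes c \<theta> :: "'a \<Rightarrow> real" and \<delta> :: real
  assumes "\<And>j. j \<in> I \<Longrightarrow> \<bar>c j\<bar> \<le> 1" and "\<And>j. j \<in> I \<Longrightarrow> \<bar>\<theta> j\<bar> \<le> \<delta>"
  shows "\<bar>\<Sum>j\<in>I. c j * \<theta> j\<bar> \<le> card I * \<delta>"
proof -
  have "\<bar>\<Sum>j\<in>I. c j * \<theta> j\<bar> \<le> (\<Sum>j\<in>I. \<bar>c j\<bar> * \<bar>\<theta> j\<bar>)"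
    unfolding abs_mult[symmetric] by (rule sum_abs)
  also have "\<dots> \<le> (\<Sum>j\<in>I. 1 * \<delta>)"
    using assms by (intro sum_mono mult_mono) (auto intro: order_trans[OF abs_ge_zero])
  finally show ?thesis by simp
qed

lemma norm_power_one_plus_minus_one_le: "cmod ((1 + t) ^ n - 1) \<le> exp (n * cmod t) - 1"
proof -
  have "cmod ((\<Prod>i<n. 1 + t) - 1) \<le> (\<Prod>i<n. 1 + cmod t) - 1"
    by (rule norm_prod_minus1_le_prod_minus1)
  also have "(\<Prod>i<n. 1 + cmod t) = (1 + cmod t) ^ n" by simp
  also have "\<dots> \<le> exp (cmod t) ^ n" by (intro power_mono) auto
  also have "\<dots> = exp (n * cmod t)" by (simp add: exp_of_nat_mult)
  finally show ?thesis by simp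
qed

lemma norm_power_minus_Re_power_le:
  fixes z :: complex
  assumes "Re z > 0"
  shows "cmod (z ^ n - of_real (Re z ^ n)) \<le> Re z ^ n * (exp (n * \<bar>Im z\<bar> / Re z) - 1)"
proof -
  define a where "a = Re z"
  define t where "t = \<i> * of_real (Im z / a)"
  have "z = of_real a * (1 + t)"
    using assms by (simp add: a_def t_def complex_eq_iff)
  then have "z ^ n = of_real (a ^ n) * (1 + t) ^ n" by (simp add: power_mult_distrib)
  then have "z ^ n - of_real (Re z ^ n) = of_real (Re z ^ n) * ((1 + t) ^ n - 1)"
    by (simp add: a_def algebra_simps)
  then have "cmod (z ^ n - of_real (Re z ^ n)) = Re z ^ n * cmod ((1 + t) ^ n - 1)"
    using assms by (simp add: norm_mult norm_power)
  also have "\<dots> \<le> Re z ^ n * (exp (n * cmod t) - 1)"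
    using assms by (intro mult_left_mono norm_power_one_plus_minus_one_le) auto
  also have "cmod t = \<bar>Im z\<bar> / Re z"
    using assms by (simp add: a_def t_def norm_mult norm_divide)
  finally show ?thesis by simp
qed

lemma norm_mult_minus_one_le:
  fixes x y :: complex
  assumes "cmod (x - 1) \<le> a" and "cmod (y - 1) \<le> b"
  shows "cmod (x * y - 1) \<le> (1 + a) * (1 + b) - 1"
proof -
  have eq: "x * y - 1 = (x - 1) * (y - 1) + (x - 1) + (y - 1)" by (simp add: algebra_simps)
  have "cmod (x * y - 1) \<le> cmod ((x - 1) * (y - 1)) + cmod (x - 1) + cmod (y - 1)"
    unfolding eq by (intro order_trans[OF norm_triangle_ineq] add_right_mono norm_triangle_ineq)
  also have "\<dots> \<le> a * b + a + b"
    unfolding norm_mult using assms by (intro add_mono mult_mono) (auto intro: order_trans[OF norm_ge_zero])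
  finally show ?thesis by (simp add: algebra_simps)
qed

lemma norm_prod_half_one_plus_cis_minus_one_le:
  fixes \<theta> :: "nat \<Rightarrow> real" and \<delta> :: real
  assumes "\<And>j. j \<in> I \<Longrightarrow> \<bar>\<theta> j\<bar> \<le> \<delta>"
  shows "cmod ((\<Prod>j\<in>I. (1 + cis (\<theta> j)) / 2) - 1) \<le> exp (card I * \<delta>) - 1"
proof -
  have prod_eq: "(\<Prod>j\<in>I. (1 + cis (\<theta> j)) / 2) = (\<Prod>j\<in>I. 1 + (cis (\<theta> j) - 1) / 2)"
    by (simp add: field_simps)
  have "cmod ((\<Prod>j\<in>I. (1 + cis (\<theta> j)) / 2) - 1) \<le> (\<Prod>j\<in>I. 1 + cmod ((cis (\<theta> j) - 1) / 2)) - 1"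
    unfolding prod_eq by (rule norm_prod_minus1_le_prod_minus1)
  also have "(\<Prod>j\<in>I. 1 + cmod ((cis (\<theta> j) - 1) / 2)) \<le> (\<Prod>j\<in>I. exp \<delta>)"
  proof (intro prod_mono conjI)
    fix j assume "j \<in> I"
    then have "cmod ((cis (\<theta> j) - 1) / 2) \<le> \<delta>"
      using assms order_trans[OF norm_cis_minus_one_le] by (fastforce simp: norm_divide)
    then show "1 + cmod ((cis (\<theta> j) - 1) / 2) \<le> exp \<delta>"
      using exp_ge_add_one_self[of \<delta>] by linarith
  qed auto
  also have "(\<Prod>j\<in>I. exp \<delta>) = exp (card I * \<delta>)" by (simp add: exp_of_nat_mult)
  finally show ?thesis by simp
qed

lemma norm_quotient_minus_two_le:
  fixes A B u :: complex
  assumes BA: "cmod (B - A) \<le> b * r\<^sup>2" and B: "b / 2 \<le> cmod B" and b: "b > 0"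
    and u: "cmod u = 1 - \<epsilon>" "cmod (u - 1) \<le> \<epsilon> + r" and \<epsilon>: "0 < \<epsilon>" "\<epsilon> \<le> 1"
  shows "cmod ((B - u\<^sup>2 * A) / ((1 - u) * B) - 2) \<le> 2 * (r\<^sup>2 / \<epsilon>) + 4 * r\<^sup>2 + (\<epsilon> + r)"
proof -
  have B0: "B \<noteq> 0" using B b by auto
  have one_minus_u: "\<epsilon> \<le> cmod (1 - u)" using norm_triangle_ineq2[of 1 u] u by simp
  then have u1: "1 - u \<noteq> 0" using \<epsilon> by auto
  have one_plus_u: "cmod (1 + u) \<le> 2" using norm_triangle_ineq[of 1 u] u \<epsilon> by simp
  \<comment> \<open>(B - u^2 A)/(1 - u) = (1 + u) B + u^2 (B - A)/(1 - u), and u^2 = 1 - (1 - u)(1 + u)\<close>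
  have quotient_eq: "(B - u\<^sup>2 * A) / ((1 - u) * B) - 2 = (B - A) / ((1 - u) * B) + ((A - B) * (1 + u) / B + (u - 1))"
    using B0 u1 by (simp add: field_simps) (simp add: algebra_simps power2_eq_square)
  have "cmod ((B - A) / ((1 - u) * B)) \<le> 2 * (r\<^sup>2 / \<epsilon>)" (is "cmod ?X \<le> _")
  proof -
    have "cmod ((B - A) / ((1 - u) * B)) \<le> (b * r\<^sup>2) / (\<epsilon> * (b / 2))"
      unfolding norm_divide norm_mult using BA B one_minus_u \<epsilon> b by (intro frac_le mult_mono) auto
    also have "\<dots> = 2 * (r\<^sup>2 / \<epsilon>)" using b by (simp add: field_simps)
    finally show ?thesis .
  qed
  moreover have "cmod ((A - B) * (1 + u) / B) \<le> 4 * r\<^sup>2" (is "cmod ?Y \<le> _")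
  proof -
    have "cmod ((A - B) * (1 + u) / B) \<le> (b * r\<^sup>2 * 2) / (b / 2)"
      unfolding norm_divide norm_mult norm_minus_commute[of A]
      using BA one_plus_u B b by (intro frac_le mult_mono) auto
    also have "\<dots> = 4 * r\<^sup>2" using b by (simp add: field_simps)
    finally show ?thesis .
  qed
  moreover have "cmod (?X + (?Y + (u - 1))) \<le> cmod ?X + (cmod ?Y + cmod (u - 1))"
    by (intro order_trans[OF norm_triangle_ineq] add_left_mono norm_triangle_ineq)
  ultimately show ?thesis unfolding quotient_eq using u(2) by linarith
qed

lemma cancel_nonzero_factor:
  fixes a b q g c z :: "'a::field"
  assumes "z \<noteq> 0"
  shows "a / (b * z) * q * g * (c * z) = c * (a * (q / b) * g)"
  using assms by (cases "b = 0") (simp_all add: field_simps)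

lemma set_integrable_bounded:
  fixes f :: "'a \<Rightarrow> 'b::{banach, second_countable_topology}"
  assumes "A \<in> sets M" "emeasure M A < \<infinity>" "f \<in> borel_measurable M"
    and "\<And>x. x \<in> A \<Longrightarrow> norm (f x) \<le> C"
  shows "set_integrable M A f"
  unfolding set_integrable_def using assms
  by (intro integrableI_bounded_set_indicator[where B = C]) auto

lemma set_integral_quotient_near_one:
  fixes F G :: "'a \<Rightarrow> complex" and h :: "'a \<Rightarrow> real"
  assumes "set_integrable M A F" "set_integrable M A G" "set_integrable M A h"
    and hpos: "(LINT x:A|M. h x) > 0"
    and G_near_h: "\<And>x. x \<in> A \<Longrightarrow> cmod (G x - complex_of_real (h x)) \<le> e1 * h x"
    and F_near_G: "\<And>x. x \<in> A \<Longrightarrow> cmod (F x - G x) \<le> e2 * h x"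
    and e: "e1 < 1" "e2 \<ge> 0"
  shows "cmod ((LINT x:A|M. F x) / (LINT x:A|M. G x) - 1) \<le> e2 / (1 - e1)"
proof -
  define H where "H = (LINT x:A|M. h x)"
  have ih: "set_integrable M A (\<lambda>x. complex_of_real (h x))"
    using assms(3) complex_of_real_integrable_eq[of M "\<lambda>x. indicator A x *\<^sub>R h x"]
    by (simp add: set_integrable_def scaleR_conv_of_real)
  have norm_integral_le: "cmod (LINT x:A|M. f x) \<le> (LINT x:A|M. e * h x)"
    if "set_integrable M A f" "\<And>x. x \<in> A \<Longrightarrow> cmod (f x) \<le> e * h x" for f :: "'a \<Rightarrow> complex" and e
  proof -
    have "cmod (LINT x:A|M. f x) \<le> (LINT x:A|M. cmod (f x))"
      using that(1) unfolding set_integrable_def set_lebesgue_integral_def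
      by (intro order_trans[OF integral_norm_bound]) (simp add: norm_scaleR)
    also have "\<dots> \<le> (LINT x:A|M. e * h x)"
      using that assms(3) by (intro set_integral_mono) (auto intro!: set_integrable_norm)
    finally show ?thesis .
  qed
  have n1: "cmod ((LINT x:A|M. F x) - (LINT x:A|M. G x)) \<le> e2 * H"
    using norm_integral_le[of "\<lambda>x. F x - G x" e2] assms(1,2) F_near_G by (simp add: H_def)
  have n2: "cmod ((LINT x:A|M. G x) - complex_of_real H) \<le> e1 * H"
    using norm_integral_le[of "\<lambda>x. G x - complex_of_real (h x)" e1] assms(2) ih G_near_h
    by (simp add: H_def set_integral_complex_of_real)
  have H: "H > 0" using hpos H_def by simp
  have "(1 - e1) * H \<le> cmod (LINT x:A|M. G x)"
    using n2 norm_triangle_ineq2[of "complex_of_real H" "(LINT x:A|M. G x)"] H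
    by (simp add: norm_minus_commute algebra_simps)
  moreover have "(1 - e1) * H > 0" using e H by simp
  ultimately have "(LINT x:A|M. G x) \<noteq> 0" by auto
  then have "cmod ((LINT x:A|M. F x) / (LINT x:A|M. G x) - 1)
      = cmod ((LINT x:A|M. F x) - (LINT x:A|M. G x)) / cmod (LINT x:A|M. G x)"
    by (simp add: field_simps norm_divide[symmetric])
  also have "\<dots> \<le> (e2 * H) / ((1 - e1) * H)"
    using n1 e H \<open>(1 - e1) * H \<le> _\<close> \<open>(1 - e1) * H > 0\<close> by (intro frac_le) auto
  also have "\<dots> = e2 / (1 - e1)" using H by simp
  finally show ?thesis .
qed

lemma angle_box_in_sets: "angle_box d \<delta> \<in> sets (PiM {..<d} (\<lambda>_. lborel))"
  unfolding angle_box_def by (intro sets_PiM_I_finite) auto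

lemma emeasure_angle_box:
  "\<delta> > 0 \<Longrightarrow> emeasure (PiM {..<d} (\<lambda>_. lborel)) (angle_box d \<delta>) = ennreal ((2 * \<delta>) ^ d)"
proof -
  assume "\<delta> > 0"
  interpret product_sigma_finite "\<lambda>_::nat. lborel :: real measure" by standard
  show ?thesis unfolding angle_box_def using \<open>\<delta> > 0\<close>
    by (subst emeasure_PiM) (auto simp: prod_ennreal ennreal_power)
qed

lemma abs_le_of_in_angle_box: "\<theta> \<in> angle_box d \<delta> \<Longrightarrow> \<forall>j<d. \<bar>\<theta> j\<bar> \<le> \<delta>"
  by (force simp: angle_box_def PiE_iff abs_le_iff)

(* Explicit relative errors in terms of epsilon and the phase bound r = d delta: of the z_d-quotient
   in the normalised prefactor (quotient_error), of the integrand against Sbar(e^(i theta))^n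
   (integrand_error), of Sbar(e^(i theta))^n against (Re Sbar(e^(i theta)))^n (power_error), and the
   resulting bound on the ratio of the two integrals minus 1 (ratio_error). *)

definition quotient_error :: "real \<Rightarrow> real \<Rightarrow> real" where
  "quotient_error \<epsilon> r = r\<^sup>2 / \<epsilon> + 2 * r\<^sup>2 + \<epsilon> + r"

definition integrand_error :: "nat \<Rightarrow> real \<Rightarrow> real \<Rightarrow> real" where
  "integrand_error n \<epsilon> r = exp (r + 4 * real n * (\<epsilon> * r + \<epsilon>\<^sup>2)) * (1 + quotient_error \<epsilon> r) - 1"

definition power_error :: "nat \<Rightarrow> real \<Rightarrow> real" where
  "power_error n r = exp (n * r ^ 3 / 3) - 1"

definition ratio_error :: "nat \<Rightarrow> real \<Rightarrow> real \<Rightarrow> real" where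
  "ratio_error n \<epsilon> r = integrand_error n \<epsilon> r * (1 + power_error n r) / (1 - power_error n r)"

lemma integrand_error_nonneg:
  assumes "0 < \<epsilon>" "0 \<le> r"
  shows "0 \<le> integrand_error n \<epsilon> r"
proof -
  have "1 * 1 \<le> exp (r + 4 * real n * (\<epsilon> * r + \<epsilon>\<^sup>2)) * (1 + quotient_error \<epsilon> r)"
    using assms by (intro mult_mono) (auto simp: quotient_error_def)
  then show ?thesis by (simp add: integrand_error_def)
qed

lemma tendsto_zero_if_eq_const_powr:
  assumes "c < 0" and "\<And>n. n > 0 \<Longrightarrow> f n = K * real n powr c"
  shows "f \<longlonglongrightarrow> 0"
proof (rule Lim_transform_eventually)
  show "(\<lambda>n. K * real n powr c) \<longlonglongrightarrow> 0"
    using tendsto_mult_right_zero[OF tendsto_neg_powr[OF assms(1) filterlim_real_sequentially]] .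
  show "\<forall>\<^sub>F n in sequentially. K * real n powr c = f n"
    using eventually_gt_at_top[of 0] by eventually_elim (simp add: assms(2))
qed

lemma power_error_tendsto_zero:
  assumes "1/3 < \<beta>"
  shows "(\<lambda>n. power_error n (c * real n powr - \<beta>)) \<longlonglongrightarrow> 0"
proof -
  have "(\<lambda>n. real n * (c * real n powr - \<beta>) ^ 3 / 3) \<longlonglongrightarrow> 0"
    using assms
    by (intro tendsto_zero_if_eq_const_powr[where K = "c ^ 3 / 3" and c = "1 - 3 * \<beta>"])
      (simp_all add: power_mult_distrib powr_power powr_add[symmetric] mult.left_commute powr_mult_base)
  from tendsto_diff[OF tendsto_exp[OF this] tendsto_const[of 1]] show ?thesis
    by (simp add: power_error_def)
qed

lemma integrand_error_tendsto_zero: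
  assumes "1/2 < \<alpha>" "\<alpha> < 2 * \<beta>" "1 < \<alpha> + \<beta>" "0 < \<beta>"
  shows "(\<lambda>n. integrand_error n (real n powr - \<alpha>) (c * real n powr - \<beta>)) \<longlonglongrightarrow> 0"
proof -
  have \<epsilon>: "(\<lambda>n::nat. real n powr - \<alpha>) \<longlonglongrightarrow> 0"
    using assms by (intro tendsto_neg_powr filterlim_real_sequentially) auto
  have r: "(\<lambda>n. c * real n powr - \<beta>) \<longlonglongrightarrow> 0"
    using assms by (intro tendsto_mult_right_zero tendsto_neg_powr filterlim_real_sequentially) auto
  have r2_over_\<epsilon>: "(\<lambda>n. (c * real n powr - \<beta>)\<^sup>2 / real n powr - \<alpha>) \<longlonglongrightarrow> 0"
  proof (rule tendsto_zero_if_eq_const_powr[where K = "c\<^sup>2" and c = "\<alpha> - 2 * \<beta>"])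
    fix n :: nat assume "0 < n"
    then have "(real n powr \<beta>)\<^sup>2 = real n powr (2 * \<beta>)" by (simp add: powr_power)
    then show "(c * real n powr - \<beta>)\<^sup>2 / real n powr - \<alpha> = c\<^sup>2 * real n powr (\<alpha> - 2 * \<beta>)"
      by (simp add: powr_minus_divide powr_diff power_divide)
  qed (use assms in simp)
  have n_\<epsilon>_r: "(\<lambda>n. real n * (real n powr - \<alpha> * (c * real n powr - \<beta>))) \<longlonglongrightarrow> 0"
    using assms by (intro tendsto_zero_if_eq_const_powr[where K = c and c = "1 - \<alpha> - \<beta>"])
      (simp_all add: powr_add[symmetric] mult.left_commute powr_mult_base, simp add: algebra_simps)
  have n_\<epsilon>2: "(\<lambda>n. real n * (real n powr - \<alpha>)\<^sup>2) \<longlonglongrightarrow> 0"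
    using assms by (intro tendsto_zero_if_eq_const_powr[where K = 1 and c = "1 - 2 * \<alpha>"])
      (simp_all add: powr_power powr_add[symmetric] powr_mult_base)
  have "(\<lambda>n. quotient_error (real n powr - \<alpha>) (c * real n powr - \<beta>)) \<longlonglongrightarrow> 0 + 2 * 0\<^sup>2 + 0 + 0"
    unfolding quotient_error_def by (intro tendsto_intros r2_over_\<epsilon> r \<epsilon>)
  then have q: "(\<lambda>n. quotient_error (real n powr - \<alpha>) (c * real n powr - \<beta>)) \<longlonglongrightarrow> 0" by simp
  have exponent: "(\<lambda>n. c * real n powr - \<beta> + 4 * real n * (real n powr - \<alpha> * (c * real n powr - \<beta>) + (real n powr - \<alpha>)\<^sup>2))
      \<longlonglongrightarrow> 0 + 4 * (0 + 0)"
    unfolding distrib_left mult.assoc[of 4] by (intro tendsto_intros r n_\<epsilon>_r n_\<epsilon>2)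
  have "(\<lambda>n. exp (c * real n powr - \<beta> + 4 * real n * (real n powr - \<alpha> * (c * real n powr - \<beta>) + (real n powr - \<alpha>)\<^sup>2))) \<longlonglongrightarrow> 1"
    using tendsto_exp[OF exponent] by simp
  from tendsto_diff[OF tendsto_mult[OF this tendsto_add[OF tendsto_const[of 1] q]] tendsto_const[of 1]]
  show ?thesis by (simp add: integrand_error_def)
qed

lemma ratio_error_tendsto_zero:
  assumes "1/2 < \<alpha>" "\<alpha> < 2 * \<beta>" "1 < \<alpha> + \<beta>" "1/3 < \<beta>"
  shows "(\<lambda>n. ratio_error n (real n powr - \<alpha>) (c * real n powr - \<beta>)) \<longlonglongrightarrow> 0"
proof -
  have "(\<lambda>n. ratio_error n (real n powr - \<alpha>) (c * real n powr - \<beta>)) \<longlonglongrightarrow> 0 * (1 + 0) / (1 - 0)"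
    unfolding ratio_error_def using assms
    by (intro tendsto_intros power_error_tendsto_zero integrand_error_tendsto_zero) auto
  then show ?thesis by simp
qed

locale zero_drift_walk =
  fixes d :: nat and S :: "(nat \<Rightarrow> int) set" and w :: "(nat \<Rightarrow> int) \<Rightarrow> real"
  assumes d: "d \<ge> 1"
    and steps: "\<forall>s\<in>S. (\<forall>j<d. s j \<in> {-1, 0, 1}) \<and> (\<forall>j\<ge>d. s j = 0) \<and> s \<noteq> (\<lambda>_. 0)"
    and wpos: "\<forall>s\<in>S. w s > 0"
    and symS: "\<forall>j<d-1. \<forall>s. s \<in> S \<longleftrightarrow> s(j := - s j) \<in> S"
    and symw: "\<forall>j<d-1. \<forall>s\<in>S. w (s(j := - s j)) = w s"
    and both: "\<forall>j<d. (\<exists>s\<in>S. s j = 1) \<and> (\<exists>s\<in>S. s j = -1)"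
    and drift: "char_A d S w (\<lambda>_. 1) = char_B d S w (\<lambda>_. 1)"
begin

abbreviation m :: nat where "m \<equiv> d - 1"

abbreviation angle_measure :: "(nat \<Rightarrow> real) measure" where
  "angle_measure \<equiv> PiM {..<d} (\<lambda>_. lborel)"

lemma finite_steps: "finite S"
proof -
  let ?extend = "\<lambda>(f::nat\<Rightarrow>int) j. if j < d then f j else 0"
  have "S \<subseteq> ?extend ` (PiE {..<d} (\<lambda>_. {-1,0,1::int}))"
  proof
    fix s assume s: "s \<in> S"
    have "s = ?extend (restrict s {..<d})" using steps s by (auto simp: fun_eq_iff)
    moreover have "restrict s {..<d} \<in> PiE {..<d} (\<lambda>_. {-1,0,1::int})" using steps s by auto
    ultimately show "s \<in> ?extend ` (PiE {..<d} (\<lambda>_. {-1,0,1::int}))" by blast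
  qed
  then show ?thesis by (rule finite_subset) (auto intro!: finite_imageI finite_PiE)
qed

lemma step_coordinate: "s \<in> S \<Longrightarrow> j < d \<Longrightarrow> s j = -1 \<or> s j = 0 \<or> s j = 1"
  using steps by auto

lemma weight_nonneg: "s \<in> S \<Longrightarrow> w s \<ge> 0"
  using wpos by force

definition total_weight :: real where
  "total_weight = (\<Sum>s\<in>S. w s)"

definition vertical_weight :: "int \<Rightarrow> real" where
  "vertical_weight c = (\<Sum>s\<in>{s\<in>S. s m = c}. w s)"

lemma vertical_weight_down_eq_up: "vertical_weight (-1) = vertical_weight 1"
  using drift by (simp add: char_A_def char_B_def vertical_weight_def flip: of_real_sum)

lemma vertical_weight_up_pos: "vertical_weight 1 > 0"
proof -
  have "m < d" using d by simp
  then obtain s where "s \<in> S" "s m = 1" using both by blast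
  then have "{s\<in>S. s m = 1} \<noteq> {}" by blast
  then show ?thesis unfolding vertical_weight_def using finite_steps wpos by (intro sum_pos) auto
qed

lemma vertical_weight_le_total: "vertical_weight c \<le> total_weight"
  unfolding vertical_weight_def total_weight_def using finite_steps weight_nonneg
  by (intro sum_mono2) auto

lemma total_weight_pos: "total_weight > 0"
  using vertical_weight_up_pos vertical_weight_le_total[of 1] by simp

lemma reflection_invariant_sum_zero:
  assumes j: "j < m" and P: "\<And>s. P (s(j := - s j)) = P s"
  shows "(\<Sum>s\<in>{s\<in>S. P s}. w s * of_int (s j)) = 0"
proof -
  let ?refl = "\<lambda>s::nat\<Rightarrow>int. s(j := - s j)"
  let ?T = "{s\<in>S. P s}"
  have refl_S: "\<And>s. s \<in> S \<Longrightarrow> ?refl s \<in> S" using symS j by blast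
  have "(\<Sum>s\<in>?T. w s * of_int (s j)) = (\<Sum>s\<in>?T. w (?refl s) * of_int (?refl s j))"
    by (rule sum.reindex_bij_witness[of _ ?refl ?refl]) (auto simp: refl_S P)
  also have "\<dots> = - (\<Sum>s\<in>?T. w s * of_int (s j))"
    using symw j by (simp add: sum_negf[symmetric])
  finally show ?thesis by simp
qed

lemma drift_coordinate_zero:
  assumes j: "j < d"
  shows "(\<Sum>s\<in>S. w s * of_int (if j = m then - s j else s j)) = 0"
proof (cases "j = m")
  case True
  have "(\<Sum>s\<in>S. w s * of_int (if j = m then - s j else s j))
      = (\<Sum>s\<in>S. (if s m = -1 then w s else 0) - (if s m = 1 then w s else 0))"
    using True step_coordinate[of _ m] d by (intro sum.cong) auto
  also have "\<dots> = vertical_weight (-1) - vertical_weight 1"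
    unfolding vertical_weight_def by (simp add: sum_subtractf sum.inter_filter finite_steps)
  finally show ?thesis using vertical_weight_down_eq_up by simp
next
  case False
  then show ?thesis using j reflection_invariant_sum_zero[of j "\<lambda>_. True"] by simp
qed

lemma vertical_drift_coordinate_zero:
  "j < m \<Longrightarrow> (\<Sum>s\<in>{s\<in>S. s m = c}. w s * of_int (s j)) = 0"
  using reflection_invariant_sum_zero[of j "\<lambda>s. s m = c"] by simp

(* Polar coordinates z_j = e^(i theta_j) for j < d - 1 and z_d = rho e^(i theta_d): phase s theta is the
   argument of the monomial of s in Sbar (whose z_d-exponent is flipped), and coeff_polar (-1) and
   coeff_polar 1 are A and B. *)

definition phase :: "(nat \<Rightarrow> int) \<Rightarrow> (nat \<Rightarrow> real) \<Rightarrow> real" where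
  "phase s \<theta> = (\<Sum>j<d. of_int (if j = m then - s j else s j) * \<theta> j)"

definition hat_phase :: "(nat \<Rightarrow> int) \<Rightarrow> (nat \<Rightarrow> real) \<Rightarrow> real" where
  "hat_phase s \<theta> = (\<Sum>j<m. of_int (s j) * \<theta> j)"

definition Sbar_polar :: "real \<Rightarrow> (nat \<Rightarrow> real) \<Rightarrow> complex" where
  "Sbar_polar \<rho> \<theta> = (\<Sum>s\<in>S. complex_of_real (w s * \<rho> powi (- s m)) * cis (phase s \<theta>))"

definition coeff_polar :: "int \<Rightarrow> (nat \<Rightarrow> real) \<Rightarrow> complex" where
  "coeff_polar c \<theta> = (\<Sum>s\<in>{s\<in>S. s m = c}. complex_of_real (w s) * cis (hat_phase s \<theta>))"

definition prefactor :: "real \<Rightarrow> (nat \<Rightarrow> real) \<Rightarrow> complex" where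
  "prefactor \<rho> \<theta> =
     (let B = coeff_polar 1 \<theta>; A = coeff_polar (-1) \<theta>; u = complex_of_real \<rho> * cis (\<theta> m)
      in (\<Prod>j<m. (1 + cis (\<theta> j)) / 2) * ((B - u\<^sup>2 * A) / ((1 - u) * B) / 2))"

lemma char_Sbar_polar:
  assumes "\<rho> > 0"
  shows "char_Sbar d S w (arc_point (\<lambda>j. if j = m then \<rho> else 1) \<theta>) = Sbar_polar \<rho> \<theta>"
proof -
  let ?z = "arc_point (\<lambda>j. if j = m then \<rho> else 1) \<theta>"
  define r' where "r' j = (if j = m then inverse \<rho> else 1)" for j
  define t' where "t' j = (if j = m then - \<theta> j else \<theta> j)" for j
  have z': "(?z(m := inverse (?z m))) j = complex_of_real (r' j) * cis (t' j)" for j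
    using assms by (auto simp: arc_point_def r'_def t'_def)
  have "(\<Prod>j<d. (?z(m := inverse (?z m))) j powi s j) = complex_of_real (\<rho> powi (- s m)) * cis (phase s \<theta>)"
    for s
  proof -
    have "(\<Prod>j<d. (?z(m := inverse (?z m))) j powi s j)
        = complex_of_real (\<Prod>j<d. r' j powi s j) * cis (\<Sum>j<d. of_int (s j) * t' j)"
      unfolding z' by (rule prod_polar_power_int) simp
    also have "(\<Prod>j<d. r' j powi s j) = (\<Prod>j<d. if j = m then inverse \<rho> powi s m else 1)"
      by (intro prod.cong) (auto simp: r'_def)
    also have "\<dots> = \<rho> powi (- s m)" using d by (simp add: power_int_minus power_int_inverse)
    also have "(\<Sum>j<d. of_int (s j) * t' j) = phase s \<theta>"
      unfolding phase_def by (intro sum.cong) (auto simp: t'_def)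
    finally show ?thesis .
  qed
  then show ?thesis
    unfolding char_Sbar_def char_poly_def Sbar_polar_def by (simp add: mult.assoc)
qed

lemma hat_monomial_polar:
  assumes "\<forall>j<m. r j = 1"
  shows "(\<Prod>j<m. arc_point r \<theta> j powi s j) = cis (hat_phase s \<theta>)"
proof -
  have "(\<Prod>j<m. arc_point r \<theta> j powi s j) = (\<Prod>j<m. (complex_of_real (r j) * cis (\<theta> j)) powi s j)"
    by (simp add: arc_point_def)
  also have "\<dots> = complex_of_real (\<Prod>j<m. r j powi s j) * cis (\<Sum>j<m. of_int (s j) * \<theta> j)"
    by (rule prod_polar_power_int) simp
  finally show ?thesis using assms by (simp add: hat_phase_def)
qed

lemma char_A_polar:
  assumes "\<forall>j<m. r j = 1"
  shows "char_A d S w (arc_point r \<theta>) = coeff_polar (-1) \<theta>"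
  unfolding char_A_def coeff_polar_def by (simp only: hat_monomial_polar[OF assms])

lemma char_B_polar:
  assumes "\<forall>j<m. r j = 1"
  shows "char_B d S w (arc_point r \<theta>) = coeff_polar 1 \<theta>"
  unfolding char_B_def coeff_polar_def by (simp only: hat_monomial_polar[OF assms])

lemma angle_bound_nonneg:
  assumes "\<forall>j<d. \<bar>\<theta> j\<bar> \<le> \<delta>"
  shows "0 \<le> (\<delta>::real)"
proof -
  have "\<bar>\<theta> 0\<bar> \<le> \<delta>" using assms d by auto
  then show ?thesis by linarith
qed

lemma abs_step_coordinate_le: "s \<in> S \<Longrightarrow> j < d \<Longrightarrow> \<bar>real_of_int (s j)\<bar> \<le> 1"
  using step_coordinate by fastforce

lemma abs_phase_le:
  assumes "s \<in> S" and "\<forall>j<d. \<bar>\<theta> j\<bar> \<le> \<delta>"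
  shows "\<bar>phase s \<theta>\<bar> \<le> real d * \<delta>"
proof -
  have "\<bar>phase s \<theta>\<bar> \<le> card {..<d} * \<delta>"
    unfolding phase_def using assms abs_step_coordinate_le[OF assms(1)]
    by (intro abs_sum_mult_le_card) auto
  then show ?thesis by simp
qed

lemma abs_hat_phase_le:
  assumes "s \<in> S" and \<theta>: "\<forall>j<d. \<bar>\<theta> j\<bar> \<le> \<delta>"
  shows "\<bar>hat_phase s \<theta>\<bar> \<le> real d * \<delta>"
proof -
  have "\<bar>hat_phase s \<theta>\<bar> \<le> card {..<m} * \<delta>"
    unfolding hat_phase_def using assms abs_step_coordinate_le[OF assms(1)]
    by (intro abs_sum_mult_le_card) auto
  also have "\<dots> \<le> real d * \<delta>"
    using angle_bound_nonneg[OF \<theta>] by (intro mult_right_mono) auto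
  finally show ?thesis .
qed

lemma weighted_phase_sum_zero: "(\<Sum>s\<in>S. w s * phase s \<theta>) = 0"
proof -
  have "(\<Sum>s\<in>S. w s * phase s \<theta>) = (\<Sum>j<d. \<theta> j * (\<Sum>s\<in>S. w s * of_int (if j = m then - s j else s j)))"
    unfolding phase_def by (simp add: sum_distrib_left sum_distrib_right mult_ac sum.swap[of _ S])
  also have "\<dots> = 0" by (intro sum.neutral ballI) (use drift_coordinate_zero in simp)
  finally show ?thesis .
qed

lemma weighted_hat_phase_sum_zero: "(\<Sum>s\<in>{s\<in>S. s m = c}. w s * hat_phase s \<theta>) = 0"
proof -
  let ?T = "{s\<in>S. s m = c}"
  have "(\<Sum>s\<in>?T. w s * hat_phase s \<theta>) = (\<Sum>s\<in>?T. \<Sum>j<m. \<theta> j * (w s * of_int (s j)))"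
    by (simp add: hat_phase_def sum_distrib_left mult_ac)
  also have "\<dots> = (\<Sum>j<m. \<theta> j * (\<Sum>s\<in>?T. w s * of_int (s j)))"
    by (subst sum.swap) (simp add: sum_distrib_left)
  also have "\<dots> = 0" by (intro sum.neutral ballI) (use vertical_drift_coordinate_zero in simp)
  finally show ?thesis .
qed

lemma Sbar_polar_one: "Sbar_polar 1 \<theta> = (\<Sum>s\<in>S. complex_of_real (w s) * cis (phase s \<theta>))"
  by (simp add: Sbar_polar_def)

lemma Re_Sbar_polar_ge:
  assumes "\<forall>j<d. \<bar>\<theta> j\<bar> \<le> \<delta>" and "real d * \<delta> \<le> 1"
  shows "total_weight / 2 \<le> Re (Sbar_polar 1 \<theta>)"
proof -
  have "total_weight / 2 = (\<Sum>s\<in>S. w s * (1/2))" by (simp add: total_weight_def sum_distrib_right)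
  also have "\<dots> \<le> (\<Sum>s\<in>S. w s * cos (phase s \<theta>))"
  proof (intro sum_mono mult_left_mono)
    fix s assume s: "s \<in> S"
    have "(phase s \<theta>)\<^sup>2 \<le> 1"
      using square_le_of_abs_le[OF order_trans[OF abs_phase_le[OF s assms(1)] assms(2)]] by simp
    then show "1/2 \<le> cos (phase s \<theta>)" using cos_ge_one_minus_square[of "phase s \<theta>"] by simp
  qed (rule weight_nonneg)
  finally show ?thesis by (simp add: Sbar_polar_one)
qed

lemma abs_Im_Sbar_polar_le:
  assumes "\<forall>j<d. \<bar>\<theta> j\<bar> \<le> \<delta>"
  shows "\<bar>Im (Sbar_polar 1 \<theta>)\<bar> \<le> total_weight * (real d * \<delta>) ^ 3 / 6"
proof -
  have "Im (Sbar_polar 1 \<theta>) = (\<Sum>s\<in>S. w s * (sin (phase s \<theta>) - phase s \<theta>))"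
    using weighted_phase_sum_zero[of \<theta>] by (simp add: Sbar_polar_one algebra_simps sum_subtractf)
  also have "\<bar>\<dots>\<bar> \<le> (\<Sum>s\<in>S. w s * ((real d * \<delta>) ^ 3 / 6))"
  proof (rule order_trans[OF sum_abs sum_mono])
    fix s assume s: "s \<in> S"
    have "\<bar>phase s \<theta>\<bar> ^ 3 \<le> (real d * \<delta>) ^ 3" using abs_phase_le[OF s assms] by (intro power_mono) auto
    then have "\<bar>sin (phase s \<theta>) - phase s \<theta>\<bar> \<le> (real d * \<delta>) ^ 3 / 6"
      using abs_sin_minus_self_le[of "phase s \<theta>"] by simp
    then show "\<bar>w s * (sin (phase s \<theta>) - phase s \<theta>)\<bar> \<le> w s * ((real d * \<delta>) ^ 3 / 6)"
      unfolding abs_mult abs_of_nonneg[OF weight_nonneg[OF s]]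
      using weight_nonneg[OF s] by (rule mult_left_mono)
  qed
  also have "\<dots> = total_weight * (real d * \<delta>) ^ 3 / 6"
    unfolding total_weight_def by (simp add: sum_distrib_right sum_divide_distrib)
  finally show ?thesis .
qed

lemma norm_Sbar_polar_one_le: "cmod (Sbar_polar 1 \<theta>) \<le> total_weight"
proof -
  have "cmod (Sbar_polar 1 \<theta>) \<le> (\<Sum>s\<in>S. cmod (complex_of_real (w s) * cis (phase s \<theta>)))"
    unfolding Sbar_polar_one by (rule norm_sum)
  also have "\<dots> = total_weight" using weight_nonneg by (simp add: total_weight_def norm_mult)
  finally show ?thesis .
qed

lemma radius_correction_sum:
  assumes "\<rho> > 0"
  shows "(\<Sum>s\<in>S. w s * (\<rho> powi (- s m) - 1)) = vertical_weight 1 * (1 - \<rho>)\<^sup>2 / \<rho>"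
proof -
  have "(\<Sum>s\<in>S. w s * (\<rho> powi (- s m) - 1))
      = (\<Sum>s\<in>S. (if s m = 1 then w s else 0) * (1 / \<rho> - 1) + (if s m = -1 then w s else 0) * (\<rho> - 1))"
  proof (rule sum.cong[OF refl])
    fix s assume "s \<in> S"
    then consider "s m = -1" | "s m = 0" | "s m = 1" using step_coordinate[of s m] d by force
    then show "w s * (\<rho> powi (- s m) - 1) = (if s m = 1 then w s else 0) * (1 / \<rho> - 1) + (if s m = -1 then w s else 0) * (\<rho> - 1)"
      by cases (simp_all add: power_int_minus divide_inverse)
  qed
  also have "\<dots> = vertical_weight 1 * (1 / \<rho> - 1) + vertical_weight (-1) * (\<rho> - 1)"
    unfolding vertical_weight_def
    by (simp add: sum.distrib sum_distrib_right[symmetric] sum.inter_filter finite_steps)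
  finally show ?thesis
    using assms vertical_weight_down_eq_up by (simp add: field_simps power2_eq_square)
qed

lemma abs_radius_factor_minus_one_le:
  fixes \<epsilon> :: real
  assumes s: "s \<in> S" and \<epsilon>: "0 < \<epsilon>" "\<epsilon> \<le> 1/2"
  shows "\<bar>(1 - \<epsilon>) powi (- s m) - 1\<bar> \<le> 2 * \<epsilon>"
proof -
  consider "s m = -1" | "s m = 0" | "s m = 1" using step_coordinate[OF s, of m] d by force
  then show ?thesis
  proof cases
    case 3
    then have "(1 - \<epsilon>) powi (- s m) - 1 = \<epsilon> / (1 - \<epsilon>)" using \<epsilon> by (simp add: power_int_minus field_simps)
    moreover have "\<epsilon> / (1 - \<epsilon>) \<le> 2 * \<epsilon>" using \<epsilon> by (simp add: field_simps)
    ultimately show ?thesis using \<epsilon> by simp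
  qed (use \<epsilon> in simp_all)
qed

lemma abs_radius_correction_sum_le:
  assumes \<epsilon>: "0 < \<epsilon>" "\<epsilon> \<le> 1/2"
  shows "\<bar>\<Sum>s\<in>S. w s * ((1 - \<epsilon>) powi (- s m) - 1)\<bar> \<le> 2 * total_weight * \<epsilon>\<^sup>2"
proof -
  have "0 < 1 - \<epsilon>" and "0 \<le> vertical_weight 1 * \<epsilon>\<^sup>2 / (1 - \<epsilon>)"
    using vertical_weight_up_pos \<epsilon> by simp_all
  then have "\<bar>\<Sum>s\<in>S. w s * ((1 - \<epsilon>) powi (- s m) - 1)\<bar> = vertical_weight 1 * \<epsilon>\<^sup>2 / (1 - \<epsilon>)"
    unfolding radius_correction_sum[OF \<open>0 < 1 - \<epsilon>\<close>] using vertical_weight_up_pos by (simp add: abs_mult)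
  also have "\<dots> \<le> vertical_weight 1 * \<epsilon>\<^sup>2 * 2"
    using vertical_weight_up_pos \<epsilon> by (simp add: field_simps)
  also have "\<dots> \<le> total_weight * \<epsilon>\<^sup>2 * 2"
    using vertical_weight_le_total by (intro mult_right_mono) auto
  finally show ?thesis by simp
qed

lemma norm_Sbar_polar_radius_change_le:
  assumes \<theta>: "\<forall>j<d. \<bar>\<theta> j\<bar> \<le> \<delta>" and \<epsilon>: "0 < \<epsilon>" "\<epsilon> \<le> 1/2"
  shows "cmod (Sbar_polar (1 - \<epsilon>) \<theta> - Sbar_polar 1 \<theta>) \<le> 2 * total_weight * (\<epsilon> * (real d * \<delta>) + \<epsilon>\<^sup>2)"
proof -
  define c where "c s = (1 - \<epsilon>) powi (- s m) - 1" for s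
  \<comment> \<open>split off the constant term, which zero drift makes second order in \<open>\<epsilon>\<close>\<close>
  have diff_eq: "Sbar_polar (1 - \<epsilon>) \<theta> - Sbar_polar 1 \<theta>
      = (\<Sum>s\<in>S. complex_of_real (w s * c s) * (cis (phase s \<theta>) - 1)) + complex_of_real (\<Sum>s\<in>S. w s * c s)"
    by (simp add: Sbar_polar_def c_def algebra_simps sum_subtractf sum.distrib)
  have "cmod (complex_of_real (w s * c s) * (cis (phase s \<theta>) - 1)) \<le> w s * (2 * \<epsilon> * (real d * \<delta>))"
    if s: "s \<in> S" for s
  proof -
    have "cmod (complex_of_real (w s * c s) * (cis (phase s \<theta>) - 1)) = w s * (\<bar>c s\<bar> * cmod (cis (phase s \<theta>) - 1))"
      using weight_nonneg[OF s] by (simp add: norm_mult abs_mult)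
    also have "\<dots> \<le> w s * (2 * \<epsilon> * (real d * \<delta>))"
      using weight_nonneg[OF s] abs_radius_factor_minus_one_le[OF s \<epsilon>]
        order_trans[OF norm_cis_minus_one_le abs_phase_le[OF s \<theta>]] \<epsilon>
      by (intro mult_left_mono mult_mono) (auto simp: c_def)
    finally show ?thesis .
  qed
  then have "cmod (\<Sum>s\<in>S. complex_of_real (w s * c s) * (cis (phase s \<theta>) - 1)) \<le> (\<Sum>s\<in>S. w s * (2 * \<epsilon> * (real d * \<delta>)))"
    by (intro order_trans[OF norm_sum sum_mono])
  also have "\<dots> = 2 * total_weight * (\<epsilon> * (real d * \<delta>))"
    unfolding total_weight_def sum_distrib_right[symmetric] by (simp add: mult_ac)
  finally have first_order: "cmod (\<Sum>s\<in>S. complex_of_real (w s * c s) * (cis (phase s \<theta>) - 1)) \<le> 2 * total_weight * (\<epsilon> * (real d * \<delta>))" .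
  have second_order: "\<bar>\<Sum>s\<in>S. w s * c s\<bar> \<le> 2 * total_weight * \<epsilon>\<^sup>2"
    unfolding c_def by (rule abs_radius_correction_sum_le[OF \<epsilon>])
  have "cmod (Sbar_polar (1 - \<epsilon>) \<theta> - Sbar_polar 1 \<theta>)
      \<le> cmod (\<Sum>s\<in>S. complex_of_real (w s * c s) * (cis (phase s \<theta>) - 1)) + \<bar>\<Sum>s\<in>S. w s * c s\<bar>"
    using norm_triangle_ineq[of "\<Sum>s\<in>S. complex_of_real (w s * c s) * (cis (phase s \<theta>) - 1)"
        "complex_of_real (\<Sum>s\<in>S. w s * c s)"]
    unfolding diff_eq norm_of_real .
  with first_order second_order show ?thesis by (simp add: distrib_left)
qed

lemma norm_coeff_polar_minus_weight_le:
  assumes \<theta>: "\<forall>j<d. \<bar>\<theta> j\<bar> \<le> \<delta>"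
  shows "cmod (coeff_polar c \<theta> - complex_of_real (vertical_weight c)) \<le> vertical_weight c * (real d * \<delta>)\<^sup>2 / 2"
proof -
  let ?T = "{s\<in>S. s m = c}"
  have "(\<Sum>s\<in>?T. complex_of_real (w s) * (\<i> * hat_phase s \<theta>)) = \<i> * complex_of_real (\<Sum>s\<in>?T. w s * hat_phase s \<theta>)"
    by (simp add: sum_distrib_left mult_ac)
  also have "\<dots> = 0" unfolding weighted_hat_phase_sum_zero by simp
  finally have linear_part: "(\<Sum>s\<in>?T. complex_of_real (w s) * (\<i> * hat_phase s \<theta>)) = 0" .
  have "(\<Sum>s\<in>?T. complex_of_real (w s) * (cis (hat_phase s \<theta>) - 1 - \<i> * hat_phase s \<theta>))
      = (\<Sum>s\<in>?T. complex_of_real (w s) * cis (hat_phase s \<theta>)) - (\<Sum>s\<in>?T. complex_of_real (w s))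
        - (\<Sum>s\<in>?T. complex_of_real (w s) * (\<i> * hat_phase s \<theta>))"
    by (simp add: sum_subtractf right_diff_distrib)
  also have "\<dots> = coeff_polar c \<theta> - complex_of_real (vertical_weight c)"
    unfolding linear_part by (simp add: coeff_polar_def vertical_weight_def)
  finally have "cmod (coeff_polar c \<theta> - complex_of_real (vertical_weight c))
      = cmod (\<Sum>s\<in>?T. complex_of_real (w s) * (cis (hat_phase s \<theta>) - 1 - \<i> * hat_phase s \<theta>))"
    by simp
  also have "\<dots> \<le> (\<Sum>s\<in>?T. w s * ((real d * \<delta>)\<^sup>2 / 2))"
  proof (rule order_trans[OF norm_sum sum_mono])
    fix s assume "s \<in> ?T"
    then have s: "s \<in> S" by simp
    have "cmod (cis (hat_phase s \<theta>) - 1 - \<i> * hat_phase s \<theta>) \<le> (real d * \<delta>)\<^sup>2 / 2"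
      using norm_cis_minus_linear_le[of "hat_phase s \<theta>"] square_le_of_abs_le[OF abs_hat_phase_le[OF s \<theta>]]
      by simp
    then show "cmod (complex_of_real (w s) * (cis (hat_phase s \<theta>) - 1 - \<i> * hat_phase s \<theta>)) \<le> w s * ((real d * \<delta>)\<^sup>2 / 2)"
      unfolding norm_mult norm_of_real abs_of_nonneg[OF weight_nonneg[OF s]]
      using weight_nonneg[OF s] by (rule mult_left_mono)
  qed
  also have "\<dots> = vertical_weight c * (real d * \<delta>)\<^sup>2 / 2"
    unfolding vertical_weight_def by (simp add: sum_distrib_right sum_divide_distrib)
  finally show ?thesis .
qed

lemma norm_coeff_polar_up_minus_down_le:
  assumes "\<forall>j<d. \<bar>\<theta> j\<bar> \<le> \<delta>"
  shows "cmod (coeff_polar 1 \<theta> - coeff_polar (-1) \<theta>) \<le> vertical_weight 1 * (real d * \<delta>)\<^sup>2"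
proof -
  have "coeff_polar 1 \<theta> - coeff_polar (-1) \<theta>
      = (coeff_polar 1 \<theta> - complex_of_real (vertical_weight 1)) - (coeff_polar (-1) \<theta> - complex_of_real (vertical_weight (-1)))"
    using vertical_weight_down_eq_up by simp
  also have "cmod \<dots> \<le> cmod (coeff_polar 1 \<theta> - complex_of_real (vertical_weight 1))
      + cmod (coeff_polar (-1) \<theta> - complex_of_real (vertical_weight (-1)))"
    by (rule norm_triangle_ineq4)
  also have "\<dots> \<le> vertical_weight 1 * (real d * \<delta>)\<^sup>2"
    using norm_coeff_polar_minus_weight_le[OF assms, of 1] norm_coeff_polar_minus_weight_le[OF assms, of "-1"]
      vertical_weight_down_eq_up by simp
  finally show ?thesis .
qed

lemma norm_coeff_polar_up_ge:
  assumes \<theta>: "\<forall>j<d. \<bar>\<theta> j\<bar> \<le> \<delta>" and r: "real d * \<delta> \<le> 1"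
  shows "vertical_weight 1 / 2 \<le> cmod (coeff_polar 1 \<theta>)"
proof -
  let ?W = "vertical_weight 1"
  have "(real d * \<delta>)\<^sup>2 \<le> 1"
    using r angle_bound_nonneg[OF \<theta>] by (simp add: power_le_one)
  then have "?W * (real d * \<delta>)\<^sup>2 / 2 \<le> ?W / 2"
    using vertical_weight_up_pos by (intro divide_right_mono mult_left_le) auto
  then have "cmod (complex_of_real ?W - coeff_polar 1 \<theta>) \<le> ?W / 2"
    using norm_coeff_polar_minus_weight_le[OF \<theta>, of 1] by (simp add: norm_minus_commute)
  then show ?thesis
    using norm_triangle_ineq2[of "complex_of_real ?W" "coeff_polar 1 \<theta>"] vertical_weight_up_pos by simp
qed

lemma norm_prefactor_minus_one_le:
  assumes \<theta>: "\<forall>j<d. \<bar>\<theta> j\<bar> \<le> \<delta>" and \<epsilon>: "0 < \<epsilon>" "\<epsilon> \<le> 1/2" and r: "real d * \<delta> \<le> 1/2"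
  shows "cmod (prefactor (1 - \<epsilon>) \<theta> - 1) \<le> exp (real d * \<delta>) * (1 + quotient_error \<epsilon> (real d * \<delta>)) - 1"
proof -
  define r where "r = real d * \<delta>"
  define u where "u = complex_of_real (1 - \<epsilon>) * cis (\<theta> m)"
  define Q where "Q = (coeff_polar 1 \<theta> - u\<^sup>2 * coeff_polar (-1) \<theta>) / ((1 - u) * coeff_polar 1 \<theta>)"
  have \<delta>: "0 \<le> \<delta>" "\<delta> \<le> r"
    using angle_bound_nonneg[OF \<theta>] d mult_right_mono[of 1 "real d" \<delta>] by (auto simp: r_def)
  have "cmod u = 1 - \<epsilon>" using \<epsilon> by (simp only: u_def norm_mult norm_of_real norm_cis) simp
  moreover have "cmod (u - 1) \<le> \<epsilon> + r"
    unfolding u_def using \<epsilon> \<theta> \<delta> d by (intro order_trans[OF norm_scaled_cis_minus_one_le]) auto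
  ultimately have "cmod (Q - 2) \<le> 2 * (r\<^sup>2 / \<epsilon>) + 4 * r\<^sup>2 + (\<epsilon> + r)"
    unfolding Q_def using norm_coeff_polar_up_minus_down_le[OF \<theta>] norm_coeff_polar_up_ge[OF \<theta>]
      vertical_weight_up_pos \<epsilon> r
    by (intro norm_quotient_minus_two_le) (simp_all add: r_def)
  moreover have "Q / 2 - 1 = (Q - 2) / 2" by (simp add: field_simps)
  then have "cmod (Q / 2 - 1) = cmod (Q - 2) / 2" by (simp only: norm_divide) simp
  ultimately have Q: "cmod (Q / 2 - 1) \<le> quotient_error \<epsilon> r"
    unfolding quotient_error_def using \<epsilon> \<delta> by linarith
  have "cmod ((\<Prod>j<m. (1 + cis (\<theta> j)) / 2) - 1) \<le> exp (real m * \<delta>) - 1"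
    using \<theta> by (intro order_trans[OF norm_prod_half_one_plus_cis_minus_one_le]) auto
  also have "\<dots> \<le> exp r - 1" using \<delta> by (simp add: r_def mult_right_mono)
  finally have "cmod (prefactor (1 - \<epsilon>) \<theta> - 1) \<le> (1 + (exp r - 1)) * (1 + quotient_error \<epsilon> r) - 1"
    unfolding prefactor_def Let_def u_def[symmetric] Q_def[symmetric]
    using Q by (rule norm_mult_minus_one_le)
  then show ?thesis by (simp add: r_def)
qed

lemma norm_integrand_minus_Sbar_power_le:
  assumes \<theta>: "\<forall>j<d. \<bar>\<theta> j\<bar> \<le> \<delta>" and \<epsilon>: "0 < \<epsilon>" "\<epsilon> \<le> 1/2" and r: "real d * \<delta> \<le> 1/2"
  shows "cmod (prefactor (1 - \<epsilon>) \<theta> * Sbar_polar (1 - \<epsilon>) \<theta> ^ n - Sbar_polar 1 \<theta> ^ n)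
           \<le> integrand_error n \<epsilon> (real d * \<delta>) * cmod (Sbar_polar 1 \<theta> ^ n)"
proof -
  define g where "g = Sbar_polar 1 \<theta>"
  define t where "t = Sbar_polar (1 - \<epsilon>) \<theta> / g - 1"
  have g: "total_weight / 2 \<le> cmod g"
    using Re_Sbar_polar_ge[OF \<theta>] r abs_Re_le_cmod[of g] by (force simp: g_def)
  then have "g \<noteq> 0" using total_weight_pos by auto
  then have Sbar_eq: "Sbar_polar (1 - \<epsilon>) \<theta> = g * (1 + t)" by (simp add: t_def field_simps)
  have "t = (Sbar_polar (1 - \<epsilon>) \<theta> - g) / g" using \<open>g \<noteq> 0\<close> by (simp add: t_def diff_divide_distrib)
  then have "cmod t = cmod (Sbar_polar (1 - \<epsilon>) \<theta> - g) / cmod g" by (simp only: norm_divide)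
  also have "\<dots> \<le> (2 * total_weight * (\<epsilon> * (real d * \<delta>) + \<epsilon>\<^sup>2)) / (total_weight / 2)"
    using norm_Sbar_polar_radius_change_le[OF \<theta> \<epsilon>] g total_weight_pos angle_bound_nonneg[OF \<theta>] \<epsilon>
    by (intro frac_le) (auto simp: g_def)
  also have "\<dots> = 4 * (\<epsilon> * (real d * \<delta>) + \<epsilon>\<^sup>2)" using total_weight_pos by (simp add: field_simps)
  finally have "cmod ((1 + t) ^ n - 1) \<le> exp (n * (4 * (\<epsilon> * (real d * \<delta>) + \<epsilon>\<^sup>2))) - 1"
    by (intro order_trans[OF norm_power_one_plus_minus_one_le]) (simp add: mult_left_mono)
  then have "cmod (prefactor (1 - \<epsilon>) \<theta> * (1 + t) ^ n - 1)
      \<le> (1 + (exp (real d * \<delta>) * (1 + quotient_error \<epsilon> (real d * \<delta>)) - 1)) * (1 + (exp (n * (4 * (\<epsilon> * (real d * \<delta>) + \<epsilon>\<^sup>2))) - 1)) - 1"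
    by (intro norm_mult_minus_one_le norm_prefactor_minus_one_le[OF \<theta> \<epsilon> r])
  also have "\<dots> = integrand_error n \<epsilon> (real d * \<delta>)"
    by (simp add: integrand_error_def exp_add algebra_simps)
  finally have "cmod (g ^ n) * cmod (prefactor (1 - \<epsilon>) \<theta> * (1 + t) ^ n - 1) \<le> cmod (g ^ n) * integrand_error n \<epsilon> (real d * \<delta>)"
    by (intro mult_left_mono) auto
  moreover have "prefactor (1 - \<epsilon>) \<theta> * Sbar_polar (1 - \<epsilon>) \<theta> ^ n - g ^ n = g ^ n * (prefactor (1 - \<epsilon>) \<theta> * (1 + t) ^ n - 1)"
    unfolding Sbar_eq power_mult_distrib by (simp add: algebra_simps)
  ultimately show ?thesis by (simp add: g_def norm_mult mult.commute)
qed

lemma norm_Sbar_power_minus_Re_power_le: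
  assumes \<theta>: "\<forall>j<d. \<bar>\<theta> j\<bar> \<le> \<delta>" and r: "real d * \<delta> \<le> 1/2"
  shows "cmod (Sbar_polar 1 \<theta> ^ n - complex_of_real (Re (Sbar_polar 1 \<theta>) ^ n))
           \<le> power_error n (real d * \<delta>) * Re (Sbar_polar 1 \<theta>) ^ n"
proof -
  define g where "g = Sbar_polar 1 \<theta>"
  have Re_g: "total_weight / 2 \<le> Re g" using Re_Sbar_polar_ge[OF \<theta>] r by (simp add: g_def)
  then have "0 < Re g" using total_weight_pos by linarith
  have "\<bar>Im g\<bar> / Re g \<le> (total_weight * (real d * \<delta>) ^ 3 / 6) / (total_weight / 2)"
    using abs_Im_Sbar_polar_le[OF \<theta>] Re_g total_weight_pos by (intro frac_le) (auto simp: g_def)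
  also have "\<dots> = (real d * \<delta>) ^ 3 / 3" using total_weight_pos by (simp add: field_simps)
  finally have "n * (\<bar>Im g\<bar> / Re g) \<le> n * ((real d * \<delta>) ^ 3 / 3)"
    by (rule mult_left_mono) simp
  then have "Re g ^ n * (exp (n * \<bar>Im g\<bar> / Re g) - 1) \<le> Re g ^ n * power_error n (real d * \<delta>)"
    unfolding power_error_def using \<open>0 < Re g\<close>
    by (intro mult_left_mono diff_right_mono exp_mono) simp_all
  with norm_power_minus_Re_power_le[OF \<open>0 < Re g\<close>, of n] show ?thesis
    by (simp add: g_def mult.commute)
qed

lemma measurable_Sbar_polar [measurable]: "Sbar_polar \<rho> \<in> borel_measurable angle_measure"
  unfolding Sbar_polar_def phase_def by measurable

lemma measurable_coeff_polar [measurable]: "coeff_polar c \<in> borel_measurable angle_measure"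
  unfolding coeff_polar_def hat_phase_def by measurable

lemma measurable_prefactor [measurable]: "prefactor \<rho> \<in> borel_measurable angle_measure"
proof -
  have "(\<lambda>\<theta>. \<theta> m) \<in> borel_measurable angle_measure"
    using measurable_component_singleton[of m "{..<d}" "\<lambda>_. lborel"] d by simp
  from measurable_compose[OF this borel_measurable_cis]
  have [measurable]: "(\<lambda>\<theta>. cis (\<theta> m)) \<in> borel_measurable angle_measure" by (simp add: o_def)
  have [measurable]: "(\<lambda>\<theta>. \<Prod>j<m. (1 + cis (\<theta> j)) / 2) \<in> borel_measurable angle_measure"
    by measurable
  show ?thesis unfolding prefactor_def Let_def by measurable
qed

lemma norm_Sbar_power_le_Re_power:
  assumes \<theta>: "\<forall>j<d. \<bar>\<theta> j\<bar> \<le> \<delta>" and r: "real d * \<delta> \<le> 1/2"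
  shows "cmod (Sbar_polar 1 \<theta> ^ n) \<le> (1 + power_error n (real d * \<delta>)) * Re (Sbar_polar 1 \<theta>) ^ n"
proof -
  have "0 \<le> Re (Sbar_polar 1 \<theta>)" using Re_Sbar_polar_ge[OF \<theta>] r total_weight_pos by simp
  then have "cmod (complex_of_real (Re (Sbar_polar 1 \<theta>) ^ n)) = Re (Sbar_polar 1 \<theta>) ^ n"
    by (simp only: norm_of_real abs_of_nonneg zero_le_power)
  then show ?thesis
    using norm_triangle_ineq2[of "Sbar_polar 1 \<theta> ^ n" "complex_of_real (Re (Sbar_polar 1 \<theta>) ^ n)"]
      norm_Sbar_power_minus_Re_power_le[OF \<theta> r, of n] by (simp add: distrib_right)
qed

lemma set_integrable_Sbar_power:
  assumes "0 < \<delta>"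
  shows "set_integrable angle_measure (angle_box d \<delta>) (\<lambda>\<theta>. Sbar_polar 1 \<theta> ^ n)"
    and "set_integrable angle_measure (angle_box d \<delta>) (\<lambda>\<theta>. Re (Sbar_polar 1 \<theta>) ^ n)"
proof -
  have A: "angle_box d \<delta> \<in> sets angle_measure" "emeasure angle_measure (angle_box d \<delta>) < \<infinity>"
    using angle_box_in_sets emeasure_angle_box[OF assms] by auto
  have "cmod (Sbar_polar 1 \<theta> ^ n) \<le> total_weight ^ n" for \<theta>
    unfolding norm_power by (intro power_mono norm_Sbar_polar_one_le) auto
  then show "set_integrable angle_measure (angle_box d \<delta>) (\<lambda>\<theta>. Sbar_polar 1 \<theta> ^ n)"
    by (intro set_integrable_bounded[OF A]) auto
  have "norm (Re (Sbar_polar 1 \<theta>) ^ n) \<le> total_weight ^ n" for \<theta>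
    unfolding real_norm_def power_abs
    by (intro power_mono) (use order_trans[OF abs_Re_le_cmod norm_Sbar_polar_one_le] in auto)
  then show "set_integrable angle_measure (angle_box d \<delta>) (\<lambda>\<theta>. Re (Sbar_polar 1 \<theta>) ^ n)"
    by (intro set_integrable_bounded[OF A]) auto
qed

lemma integral_Re_Sbar_power_pos:
  assumes \<delta>: "0 < \<delta>" "real d * \<delta> \<le> 1"
  shows "0 < (LINT \<theta>:angle_box d \<delta>|angle_measure. Re (Sbar_polar 1 \<theta>) ^ n)"
proof -
  let ?A = "angle_box d \<delta>"
  have A: "?A \<in> sets angle_measure" "emeasure angle_measure ?A < \<infinity>"
    using angle_box_in_sets emeasure_angle_box[OF \<delta>(1)] by auto
  have "0 < measure angle_measure ?A * (total_weight / 2) ^ n"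
    using emeasure_angle_box[OF \<delta>(1)] \<delta> total_weight_pos by (simp add: measure_def)
  also have "\<dots> = (LINT \<theta>:?A|angle_measure. (total_weight / 2) ^ n)"
    using A by (simp add: set_integral_const)
  also have "\<dots> \<le> (LINT \<theta>:?A|angle_measure. Re (Sbar_polar 1 \<theta>) ^ n)"
  proof (rule set_integral_mono)
    show "set_integrable angle_measure ?A (\<lambda>_. (total_weight / 2) ^ n)"
      using A total_weight_pos by (intro set_integrable_bounded[where C = "(total_weight / 2) ^ n"]) auto
    show "set_integrable angle_measure ?A (\<lambda>\<theta>. Re (Sbar_polar 1 \<theta>) ^ n)"
      using set_integrable_Sbar_power(2)[OF \<delta>(1)] .
    show "(total_weight / 2) ^ n \<le> Re (Sbar_polar 1 \<theta>) ^ n" if "\<theta> \<in> ?A" for \<theta>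
      using Re_Sbar_polar_ge[OF abs_le_of_in_angle_box[OF that] \<delta>(2)] total_weight_pos
      by (intro power_mono) auto
  qed
  finally show ?thesis .
qed

lemma polar_integral_quotient_le:
  assumes \<epsilon>: "0 < \<epsilon>" "\<epsilon> \<le> 1/2" and \<delta>: "0 < \<delta>" "real d * \<delta> \<le> 1/2"
    and E: "power_error n (real d * \<delta>) < 1"
  shows "cmod ((LINT \<theta>:angle_box d \<delta>|angle_measure. prefactor (1 - \<epsilon>) \<theta> * Sbar_polar (1 - \<epsilon>) \<theta> ^ n) /
                (LINT \<theta>:angle_box d \<delta>|angle_measure. Sbar_polar 1 \<theta> ^ n) - 1) \<le> ratio_error n \<epsilon> (real d * \<delta>)"
proof -
  let ?A = "angle_box d \<delta>" and ?E1 = "power_error n (real d * \<delta>)" and ?E2 = "integrand_error n \<epsilon> (real d * \<delta>)"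
  have E1: "0 \<le> ?E1" using \<delta> by (simp add: power_error_def)
  have E2: "0 \<le> ?E2" using \<delta> \<epsilon> by (intro integrand_error_nonneg) auto
  have F_near_G: "cmod (prefactor (1 - \<epsilon>) \<theta> * Sbar_polar (1 - \<epsilon>) \<theta> ^ n - Sbar_polar 1 \<theta> ^ n)
      \<le> ?E2 * (1 + ?E1) * Re (Sbar_polar 1 \<theta>) ^ n" if "\<theta> \<in> ?A" for \<theta>
    using norm_integrand_minus_Sbar_power_le[OF abs_le_of_in_angle_box[OF that] \<epsilon> \<delta>(2), of n]
      mult_left_mono[OF norm_Sbar_power_le_Re_power[OF abs_le_of_in_angle_box[OF that] \<delta>(2), of n] E2]
    by (simp add: mult.assoc)
  have int_F: "set_integrable angle_measure ?A (\<lambda>\<theta>. prefactor (1 - \<epsilon>) \<theta> * Sbar_polar (1 - \<epsilon>) \<theta> ^ n)"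
  proof (rule set_integrable_bounded)
    show "?A \<in> sets angle_measure" "emeasure angle_measure ?A < \<infinity>"
      using angle_box_in_sets emeasure_angle_box[OF \<delta>(1)] by auto
    show "(\<lambda>\<theta>. prefactor (1 - \<epsilon>) \<theta> * Sbar_polar (1 - \<epsilon>) \<theta> ^ n) \<in> borel_measurable angle_measure"
      by measurable
    fix \<theta> assume \<theta>: "\<theta> \<in> ?A"
    have "0 \<le> Re (Sbar_polar 1 \<theta>)"
      using Re_Sbar_polar_ge[OF abs_le_of_in_angle_box[OF \<theta>]] \<delta> total_weight_pos by simp
    then have "Re (Sbar_polar 1 \<theta>) ^ n \<le> total_weight ^ n"
      using abs_Re_le_cmod[of "Sbar_polar 1 \<theta>"] norm_Sbar_polar_one_le[of \<theta>] by (intro power_mono) auto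
    then have "cmod (prefactor (1 - \<epsilon>) \<theta> * Sbar_polar (1 - \<epsilon>) \<theta> ^ n - Sbar_polar 1 \<theta> ^ n)
        \<le> ?E2 * (1 + ?E1) * total_weight ^ n"
      using E1 E2 by (intro order_trans[OF F_near_G[OF \<theta>] mult_left_mono]) auto
    moreover have "cmod (Sbar_polar 1 \<theta> ^ n) \<le> total_weight ^ n"
      unfolding norm_power by (intro power_mono norm_Sbar_polar_one_le) auto
    ultimately show "norm (prefactor (1 - \<epsilon>) \<theta> * Sbar_polar (1 - \<epsilon>) \<theta> ^ n) \<le> total_weight ^ n + ?E2 * (1 + ?E1) * total_weight ^ n"
      using norm_triangle_sub[of "prefactor (1 - \<epsilon>) \<theta> * Sbar_polar (1 - \<epsilon>) \<theta> ^ n" "Sbar_polar 1 \<theta> ^ n"]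
      by linarith
  qed
  have "cmod ((LINT \<theta>:?A|angle_measure. prefactor (1 - \<epsilon>) \<theta> * Sbar_polar (1 - \<epsilon>) \<theta> ^ n) /
                (LINT \<theta>:?A|angle_measure. Sbar_polar 1 \<theta> ^ n) - 1) \<le> ?E2 * (1 + ?E1) / (1 - ?E1)"
  proof (rule set_integral_quotient_near_one[OF int_F set_integrable_Sbar_power[OF \<delta>(1)]])
    show "0 < (LINT \<theta>:?A|angle_measure. Re (Sbar_polar 1 \<theta>) ^ n)"
      using \<delta> by (intro integral_Re_Sbar_power_pos) auto
    show "cmod (Sbar_polar 1 \<theta> ^ n - complex_of_real (Re (Sbar_polar 1 \<theta>) ^ n)) \<le> ?E1 * Re (Sbar_polar 1 \<theta>) ^ n"
      if "\<theta> \<in> ?A" for \<theta>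
      using norm_Sbar_power_minus_Re_power_le[OF abs_le_of_in_angle_box[OF that] \<delta>(2)] .
  qed (use F_near_G E E1 E2 in auto)
  then show ?thesis by (simp add: ratio_error_def)
qed

lemma arc_integrand_polar:
  fixes \<theta> :: "nat \<Rightarrow> real"
  assumes \<rho>: "\<rho> > 0"
  defines "z \<equiv> arc_point (\<lambda>j. if j = m then \<rho> else 1) \<theta>"
  shows "(\<Prod>j<d-1. 1 + z j) / (char_B d S w z * (\<Prod>j<d. z j))
           * ((char_B d S w z - z (d-1) ^ 2 * char_A d S w z) / (1 - z (d-1)))
           * char_Sbar d S w z ^ n * (\<Prod>j<d. \<i> * z j)
         = (2 * \<i>) ^ d * (prefactor \<rho> \<theta> * Sbar_polar \<rho> \<theta> ^ n)"
proof -
  have hat: "\<forall>j<m. (if j = m then \<rho> else 1) = 1" by simp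
  define u where "u = complex_of_real \<rho> * cis (\<theta> m)"
  define X where "X = (\<Prod>j<m. (1 + cis (\<theta> j)) / 2)"
  define Q where "Q = (coeff_polar 1 \<theta> - u\<^sup>2 * coeff_polar (-1) \<theta>) / ((1 - u) * coeff_polar 1 \<theta>)"
  have "(\<Prod>j<m. 1 + z j) = (\<Prod>j<m. 1 + cis (\<theta> j))" by (intro prod.cong) (auto simp: z_def arc_point_def)
  also have "\<dots> = 2 ^ m * X" by (simp add: X_def prod_dividef)
  finally have hat_prod: "(\<Prod>j<m. 1 + z j) = 2 ^ m * X" .
  have zm: "z m = u" by (simp add: z_def u_def arc_point_def)
  have Z: "(\<Prod>j<d. z j) \<noteq> 0" using \<rho> by (auto simp: z_def arc_point_def)
  have prod_i: "(\<Prod>j<d. \<i> * z j) = \<i> ^ d * (\<Prod>j<d. z j)" by (simp add: prod.distrib)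
  have "(\<Prod>j<m. 1 + z j) / (char_B d S w z * (\<Prod>j<d. z j))
           * ((char_B d S w z - z m ^ 2 * char_A d S w z) / (1 - z m))
           * char_Sbar d S w z ^ n * (\<Prod>j<d. \<i> * z j)
      = \<i> ^ d * (2 ^ m * X * Q * Sbar_polar \<rho> \<theta> ^ n)"
    unfolding prod_i cancel_nonzero_factor[OF Z] hat_prod
    unfolding z_def char_B_polar[OF hat] char_A_polar[OF hat] char_Sbar_polar[OF \<rho>]
    unfolding z_def[symmetric] zm
    by (simp add: Q_def divide_divide_eq_left)
  also have "\<dots> = (2 * \<i>) ^ d * (X * (Q / 2) * Sbar_polar \<rho> \<theta> ^ n)"
    using d by (cases d) (simp_all add: power_mult_distrib)
  also have "X * (Q / 2) = prefactor \<rho> \<theta>"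
    unfolding prefactor_def Let_def X_def Q_def u_def ..
  finally show ?thesis .
qed

lemma integral_ratio_le:
  assumes \<epsilon>: "0 < \<epsilon>" "\<epsilon> \<le> 1/2" and \<delta>: "0 < \<delta>" "real d * \<delta> \<le> 1/2"
    and E: "power_error n (real d * \<delta>) < 1"
  shows "cmod ((1 / (2 * complex_of_real pi * \<i>) ^ d *
            torus_arc_integral d (\<lambda>j. if j = d - 1 then 1 - \<epsilon> else 1) \<delta>
              (\<lambda>z. (\<Prod>j<d-1. 1 + z j) / (char_B d S w z * (\<Prod>j<d. z j))
                   * ((char_B d S w z - z (d-1) ^ 2 * char_A d S w z) / (1 - z (d-1)))
                   * char_Sbar d S w z ^ n))
          / (1 / complex_of_real pi ^ d *
            (LINT \<theta>:angle_box d \<delta>|angle_measure. exp (of_nat n * Ln (char_Sbar d S w (arc_point (\<lambda>_. 1) \<theta>)))))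
          - 1) \<le> ratio_error n \<epsilon> (real d * \<delta>)"
proof -
  have "torus_arc_integral d (\<lambda>j. if j = d - 1 then 1 - \<epsilon> else 1) \<delta>
              (\<lambda>z. (\<Prod>j<d-1. 1 + z j) / (char_B d S w z * (\<Prod>j<d. z j))
                   * ((char_B d S w z - z (d-1) ^ 2 * char_A d S w z) / (1 - z (d-1)))
                   * char_Sbar d S w z ^ n)
      = (LINT \<theta>:angle_box d \<delta>|angle_measure. (2 * \<i>) ^ d * (prefactor (1 - \<epsilon>) \<theta> * Sbar_polar (1 - \<epsilon>) \<theta> ^ n))"
    unfolding torus_arc_integral_def using \<epsilon>
    by (intro set_lebesgue_integral_cong[OF angle_box_in_sets] allI impI arc_integrand_polar) simp
  also have "\<dots> = (2 * \<i>) ^ d * (LINT \<theta>:angle_box d \<delta>|angle_measure. prefactor (1 - \<epsilon>) \<theta> * Sbar_polar (1 - \<epsilon>) \<theta> ^ n)"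
    by (rule set_integral_mult_right)
  moreover have "(LINT \<theta>:angle_box d \<delta>|angle_measure. exp (of_nat n * Ln (char_Sbar d S w (arc_point (\<lambda>_. 1) \<theta>))))
      = (LINT \<theta>:angle_box d \<delta>|angle_measure. Sbar_polar 1 \<theta> ^ n)"
  proof (intro set_lebesgue_integral_cong[OF angle_box_in_sets] allI impI)
    fix \<theta> assume "\<theta> \<in> angle_box d \<delta>"
    then have "0 < Re (Sbar_polar 1 \<theta>)"
      using Re_Sbar_polar_ge[OF abs_le_of_in_angle_box] total_weight_pos \<delta> by fastforce
    then have "Sbar_polar 1 \<theta> \<noteq> 0" by auto
    then show "exp (of_nat n * Ln (char_Sbar d S w (arc_point (\<lambda>_. 1) \<theta>))) = Sbar_polar 1 \<theta> ^ n"
      using char_Sbar_polar[of 1 \<theta>] by (simp add: exp_of_nat_mult)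
  qed
  ultimately show ?thesis
    using polar_integral_quotient_le[OF assms] by (simp add: power_mult_distrib field_simps)
qed

end

theorem mainTheorem6:
  fixes d :: nat and S :: "(nat \<Rightarrow> int) set" and w :: "(nat \<Rightarrow> int) \<Rightarrow> real"
    and \<alpha> \<beta> :: real
  assumes d: "d \<ge> 1"
    and steps: "\<forall>s\<in>S. (\<forall>j<d. s j \<in> {-1, 0, 1}) \<and> (\<forall>j\<ge>d. s j = 0) \<and> s \<noteq> (\<lambda>_. 0)"
    and wpos: "\<forall>s\<in>S. w s > 0"
    and symS: "\<forall>j<d-1. \<forall>s. s \<in> S \<longleftrightarrow> s(j := - s j) \<in> S"
    and symw: "\<forall>j<d-1. \<forall>s\<in>S. w (s(j := - s j)) = w s"
    and both: "\<forall>j<d. (\<exists>s\<in>S. s j = 1) \<and> (\<exists>s\<in>S. s j = -1)"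
    and drift: "char_A d S w (\<lambda>_. 1) = char_B d S w (\<lambda>_. 1)"
    and \<alpha>\<beta>: "1/2 < \<alpha>" "\<alpha> < 2 * \<beta>" "\<alpha> + \<beta> > 1" "1/3 < \<beta>" "\<beta> < 1/2"
  shows "(\<lambda>n::nat.
            1 / (2 * complex_of_real pi * \<i>) ^ d *
            torus_arc_integral d (\<lambda>j. if j = d - 1 then 1 - real n powr (-\<alpha>) else 1) (real n powr (-\<beta>))
              (\<lambda>z. (\<Prod>j<d-1. 1 + z j) / (char_B d S w z * (\<Prod>j<d. z j))
                   * ((char_B d S w z - z (d-1) ^ 2 * char_A d S w z) / (1 - z (d-1)))
                   * char_Sbar d S w z ^ n))
         \<sim>[at_top]
         (\<lambda>n::nat.
            1 / complex_of_real pi ^ d *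
            (LINT \<theta>:angle_box d (real n powr (-\<beta>))|PiM {..<d} (\<lambda>_. lborel).
               exp (of_nat n * Ln (char_Sbar d S w (arc_point (\<lambda>_. 1) \<theta>)))))"
proof -
  interpret zero_drift_walk d S w
    using d steps wpos symS symw both drift by unfold_locales
  have \<epsilon>: "(\<lambda>n::nat. real n powr - \<alpha>) \<longlonglongrightarrow> 0" and r: "(\<lambda>n::nat. d * real n powr - \<beta>) \<longlonglongrightarrow> 0"
    using \<alpha>\<beta> by (auto intro!: tendsto_mult_right_zero tendsto_neg_powr filterlim_real_sequentially)
  have E: "(\<lambda>n. power_error n (d * real n powr - \<beta>)) \<longlonglongrightarrow> 0"
    using \<alpha>\<beta>(4) by (rule power_error_tendsto_zero)
  have error_lim: "(\<lambda>n. ratio_error n (real n powr - \<alpha>) (d * real n powr - \<beta>)) \<longlonglongrightarrow> 0"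
    using \<alpha>\<beta> by (intro ratio_error_tendsto_zero) auto
  have small: "\<forall>\<^sub>F n in sequentially. 0 < n \<and> real n powr - \<alpha> \<le> 1/2 \<and> d * real n powr - \<beta> \<le> 1/2
                    \<and> power_error n (d * real n powr - \<beta>) < 1"
    using eventually_gt_at_top[of 0] order_tendstoD(2)[OF \<epsilon>, of "1/2", simplified]
      order_tendstoD(2)[OF r, of "1/2", simplified] order_tendstoD(2)[OF E, of 1, simplified]
    by eventually_elim auto
  show ?thesis
    apply (rule asymp_equivI', rule LIM_zero_cancel, rule Lim_null_comparison[OF _ error_lim])
    using small by eventually_elim (rule integral_ratio_le; simp)
qed

end
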